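(* Let $G$ be a (not necessarily connected) graph on $n\ge1$ vertices with adjacency matrix $A$ and let $m\ge1$. Then there exist $\mu\in\mathbb{R}$, $f\in\mathbb{R}^m$, $g\in\mathbb{R}^n$ such that, with $\alpha=-2m$, \[ (J_m+\alpha I)f=\tfrac{\mu}{2}\mathbf 1,\quad (A-J_n-\alpha I)g=-\tfrac{\mu}{2}\mathbf 1,\quad \langle f,f\rangle+\langle g,g\rangle=1,\quad \langle\mathbf 1,f\rangle+\langle\mathbf 1,g\rangle=0, \] if and only if $-2m$ is an eigenvalue of $A$.
   Context: $J_k$ is the $k\times k$ all-ones matrix, $\mathbf 1$ the all-ones vector of the appropriate size, $I$ the identity. *)

theory Defs
  imports "Jordan_Normal_Form.Matrix" "Jordan_Normal_Form.Char_Poly"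
begin

definition all_ones_mat :: "nat \<Rightarrow> real mat" where
  "all_ones_mat k = mat k k (\<lambda>_. 1)"

definition ones_vec :: "nat \<Rightarrow> real vec" where
  "ones_vec k = vec k (\<lambda>_. 1)"

text \<open>A (simple, undirected, not necessarily connected) graph on the vertex set
  {0..<n} is given by a symmetric irreflexive edge relation E.\<close>
definition simple_graph :: "nat \<Rightarrow> (nat \<Rightarrow> nat \<Rightarrow> bool) \<Rightarrow> bool" where
  "simple_graph n E \<longleftrightarrow> (\<forall>i<n. \<forall>j<n. E i j \<longleftrightarrow> E j i) \<and> (\<forall>i<n. \<not> E i i)"

definition adjacency_matrix :: "nat \<Rightarrow> (nat \<Rightarrow> nat \<Rightarrow> bool) \<Rightarrow> real mat" where
  "adjacency_matrix n E = mat n n (\<lambda>(i, j). if E i j then 1 else 0)"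

end

(*
  Write J = all_ones_mat and 1 = ones_vec. Entrywise, (J + \<alpha> I) f = c 1 reads
  <1,f> + \<alpha> f_i = c, so f is constant; for \<alpha> = -2m this gives f = -\<mu>/(2m) 1
  and <1,f> = -\<mu>/2, hence <1,g> = \<mu>/2. The term J g = <1,g> 1 then cancels the
  right-hand side of the second equation, which becomes A g = -2m g; the
  normalisation excludes g = 0, since then \<mu> = 0 and f = 0. Conversely, for an
  eigenvector v the vectors g = v, f = -<1,v>/m 1 and \<mu> = 2<1,v> solve the
  homogeneous equations, and rescaling achieves <f,f> + <g,g> = 1.
*)
theory Submission
  imports Defs
begin

lemma dim_ones_vec [simp]: "dim_vec (ones_vec k) = k"
  by (simp add: ones_vec_def)

lemma ones_vec_carrier [simp]: "ones_vec k \<in> carrier_vec k"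
  by (simp add: ones_vec_def)

lemma index_ones_vec [simp]: "i < k \<Longrightarrow> ones_vec k $ i = 1"
  by (simp add: ones_vec_def)

lemma ones_vec_scalar_prod:
  "v \<in> carrier_vec k \<Longrightarrow> ones_vec k \<bullet> v = (\<Sum>i<k. v $ i)"
  by (simp add: ones_vec_def scalar_prod_def lessThan_atLeast0)

lemma ones_vec_scalar_prod_ones_vec [simp]: "ones_vec k \<bullet> ones_vec k = real k"
  by (simp add: ones_vec_def scalar_prod_def)

lemma scalar_prod_self_pos:
  assumes "(v :: real vec) \<in> carrier_vec k" and "v \<noteq> 0\<^sub>v k"
  shows "v \<bullet> v > 0"
proof -
  obtain j where j: "j < k" "v $ j \<noteq> 0"
    using assms by (metis carrier_vecD eq_vecI index_zero_vec)
  have "(\<Sum>i<k. (v $ i)\<^sup>2) > 0"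
    by (rule sum_pos2[of _ j]) (use j in auto)
  then show ?thesis
    using assms(1) by (simp add: scalar_prod_def lessThan_atLeast0 power2_eq_square)
qed

lemma all_ones_plus_smult_one_mult_vec_index:
  assumes "f \<in> carrier_vec k" and "i < k"
  shows "((all_ones_mat k + a \<cdot>\<^sub>m 1\<^sub>m k) *\<^sub>v f) $ i = ones_vec k \<bullet> f + a * f $ i"
  using assms
  by (simp add: add_mult_distrib_mat_vec[of _ k k] all_ones_mat_def ones_vec_def
      scalar_prod_def row_def mult.assoc if_distrib if_distribR sum.delta cong: if_cong)

lemma minus_all_ones_minus_smult_one_mult_vec_index:
  assumes "A \<in> carrier_mat k k" and "g \<in> carrier_vec k" and "i < k"
  shows "((A - all_ones_mat k - a \<cdot>\<^sub>m 1\<^sub>m k) *\<^sub>v g) $ i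
           = (A *\<^sub>v g) $ i - ones_vec k \<bullet> g - a * g $ i"
proof -
  have "(A - all_ones_mat k - a \<cdot>\<^sub>m 1\<^sub>m k) *\<^sub>v g
          = (A - all_ones_mat k) *\<^sub>v g - (a \<cdot>\<^sub>m 1\<^sub>m k) *\<^sub>v g"
    using assms by (intro minus_mult_distrib_mat_vec) (auto simp: all_ones_mat_def)
  also have "(A - all_ones_mat k) *\<^sub>v g = A *\<^sub>v g - all_ones_mat k *\<^sub>v g"
    using assms by (intro minus_mult_distrib_mat_vec) (auto simp: all_ones_mat_def)
  finally show ?thesis
    using assms by (simp add: all_ones_mat_def ones_vec_def scalar_prod_def row_def
        mult.assoc if_distrib if_distribR sum.delta cong: if_cong)
qed

lemma all_ones_plus_smult_one_mult_vec_eq_const_iff: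
  assumes f: "f \<in> carrier_vec k" and "a \<noteq> 0" and "real k + a \<noteq> 0"
  shows "(all_ones_mat k + a \<cdot>\<^sub>m 1\<^sub>m k) *\<^sub>v f = c \<cdot>\<^sub>v ones_vec k
           \<longleftrightarrow> f = (c / (real k + a)) \<cdot>\<^sub>v ones_vec k"
proof
  assume eq: "(all_ones_mat k + a \<cdot>\<^sub>m 1\<^sub>m k) *\<^sub>v f = c \<cdot>\<^sub>v ones_vec k"
  define S where "S = ones_vec k \<bullet> f"
  have row: "S + a * f $ i = c" if "i < k" for i
  proof -
    have "S + a * f $ i = ((all_ones_mat k + a \<cdot>\<^sub>m 1\<^sub>m k) *\<^sub>v f) $ i"
      using f that by (simp only: all_ones_plus_smult_one_mult_vec_index S_def)
    also have "\<dots> = c"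
      using eq that by (simp add: ones_vec_def)
    finally show ?thesis .
  qed
  have "(\<Sum>i<k. S + a * f $ i) = real k * c"
    using row by simp
  then have "(real k + a) * S = real k * c"
    by (simp add: sum.distrib sum_distrib_left[symmetric] S_def ones_vec_scalar_prod[OF f]
        algebra_simps)
  then have S: "S = real k * c / (real k + a)"
    using assms(3) by (simp add: eq_divide_eq mult.commute)
  have "f $ i = c / (real k + a)" if "i < k" for i
  proof -
    have "a * f $ i = a * (c / (real k + a))"
      using row[OF that] S assms(3) by (simp add: field_simps)
    then show ?thesis
      using assms(2) by (metis mult_left_cancel)
  qed
  then show "f = (c / (real k + a)) \<cdot>\<^sub>v ones_vec k"
    using f by (intro eq_vecI) (auto simp: ones_vec_def)
next
  assume f_const: "f = (c / (real k + a)) \<cdot>\<^sub>v ones_vec k"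
  have "((all_ones_mat k + a \<cdot>\<^sub>m 1\<^sub>m k) *\<^sub>v f) $ i = c" if "i < k" for i
  proof -
    have "((all_ones_mat k + a \<cdot>\<^sub>m 1\<^sub>m k) *\<^sub>v f) $ i = ones_vec k \<bullet> f + a * f $ i"
      using f that by (rule all_ones_plus_smult_one_mult_vec_index)
    also have "\<dots> = c / (real k + a) * (real k + a)"
      using that by (simp add: f_const algebra_simps
          add_divide_distrib)
    also have "\<dots> = c"
      using assms(3) by simp
    finally show ?thesis .
  qed
  then show "(all_ones_mat k + a \<cdot>\<^sub>m 1\<^sub>m k) *\<^sub>v f = c \<cdot>\<^sub>v ones_vec k"
    by (intro eq_vecI) (auto simp: all_ones_mat_def ones_vec_def)
qed

lemma minus_all_ones_minus_smult_one_mult_vec_eq_const_iff: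
  assumes A: "A \<in> carrier_mat k k" and g: "g \<in> carrier_vec k" and "ones_vec k \<bullet> g = - d"
  shows "(A - all_ones_mat k - a \<cdot>\<^sub>m 1\<^sub>m k) *\<^sub>v g = d \<cdot>\<^sub>v ones_vec k
           \<longleftrightarrow> A *\<^sub>v g = a \<cdot>\<^sub>v g"
proof -
  have "((A - all_ones_mat k - a \<cdot>\<^sub>m 1\<^sub>m k) *\<^sub>v g) $ i = d \<longleftrightarrow> (A *\<^sub>v g) $ i = a * g $ i"
    if "i < k" for i
    using minus_all_ones_minus_smult_one_mult_vec_index[OF A g that] assms(3) by auto
  then show ?thesis
    using A g by (auto simp: vec_eq_iff all_ones_mat_def)
qed

lemma eigenvector_of_solution:
  assumes A: "A \<in> carrier_mat n n" and m: "m > 0"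
    and f: "f \<in> carrier_vec m" and g: "g \<in> carrier_vec n"
    and eq_f: "(all_ones_mat m + (- 2 * real m) \<cdot>\<^sub>m 1\<^sub>m m) *\<^sub>v f = (\<mu> / 2) \<cdot>\<^sub>v ones_vec m"
    and eq_g: "(A - all_ones_mat n - (- 2 * real m) \<cdot>\<^sub>m 1\<^sub>m n) *\<^sub>v g
                 = (- \<mu> / 2) \<cdot>\<^sub>v ones_vec n"
    and norm: "f \<bullet> f + g \<bullet> g = 1"
    and sum: "ones_vec m \<bullet> f + ones_vec n \<bullet> g = 0"
  shows "eigenvector A g (- 2 * real m)"
proof -
  have f_const: "f = (\<mu> / 2 / (real m + - 2 * real m)) \<cdot>\<^sub>v ones_vec m"
    using eq_f all_ones_plus_smult_one_mult_vec_eq_const_iff[OF f] m by simp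
  then have "ones_vec n \<bullet> g = - (- \<mu> / 2)"
    using sum m by (simp add: field_simps)
  then have Ag: "A *\<^sub>v g = (- 2 * real m) \<cdot>\<^sub>v g"
    using eq_g minus_all_ones_minus_smult_one_mult_vec_eq_const_iff[OF A g] by blast
  have "g \<noteq> 0\<^sub>v n"
  proof
    assume g0: "g = 0\<^sub>v n"
    then have "\<mu> = 0"
      using \<open>ones_vec n \<bullet> g = - (- \<mu> / 2)\<close> by simp
    then have "f = 0\<^sub>v m"
      using f_const by (auto simp: vec_eq_iff)
    then show False
      using norm g0 by simp
  qed
  then show ?thesis
    using A g Ag by (simp add: eigenvector_def)
qed

lemma solution_of_eigenvector:
  assumes A: "A \<in> carrier_mat n n" and m: "m > 0" and "eigenvector A v (- 2 * real m)"
  shows "\<exists>\<mu> f g. f \<in> carrier_vec m \<and> g \<in> carrier_vec n \<and>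
           (all_ones_mat m + (- 2 * real m) \<cdot>\<^sub>m 1\<^sub>m m) *\<^sub>v f = (\<mu> / 2) \<cdot>\<^sub>v ones_vec m \<and>
           (A - all_ones_mat n - (- 2 * real m) \<cdot>\<^sub>m 1\<^sub>m n) *\<^sub>v g = (- \<mu> / 2) \<cdot>\<^sub>v ones_vec n \<and>
           f \<bullet> f + g \<bullet> g = 1 \<and>
           ones_vec m \<bullet> f + ones_vec n \<bullet> g = 0"
proof -
  have v: "v \<in> carrier_vec n" "v \<noteq> 0\<^sub>v n" and Av: "A *\<^sub>v v = (- 2 * real m) \<cdot>\<^sub>v v"
    using assms by (auto simp: eigenvector_def)
  define s where "s = ones_vec n \<bullet> v"
  define c where "c = 1 / sqrt (s\<^sup>2 / real m + v \<bullet> v)"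
  define f where "f = (- c * s / real m) \<cdot>\<^sub>v ones_vec m"
  define g where "g = c \<cdot>\<^sub>v v"
  have f_carrier: "f \<in> carrier_vec m" and g_carrier: "g \<in> carrier_vec n"
    using v by (simp_all add: f_def g_def)
  have "s\<^sup>2 / real m + v \<bullet> v > 0"
    using scalar_prod_self_pos[OF v] by (simp add: add_nonneg_pos)
  moreover have "f \<bullet> f + g \<bullet> g = c\<^sup>2 * (s\<^sup>2 / real m + v \<bullet> v)"
    using v m by (simp add: f_def g_def power2_eq_square
        field_simps)
  ultimately have norm: "f \<bullet> f + g \<bullet> g = 1"
    by (simp add: c_def power_divide)
  have sum_f: "ones_vec m \<bullet> f = - (c * s)" and sum_g: "ones_vec n \<bullet> g = c * s"
    using v m by (simp_all add: f_def g_def s_def)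
  have "f = (c * s / (real m + - 2 * real m)) \<cdot>\<^sub>v ones_vec m"
    using m by (simp add: f_def field_simps)
  then have eq_f: "(all_ones_mat m + (- 2 * real m) \<cdot>\<^sub>m 1\<^sub>m m) *\<^sub>v f = (c * s) \<cdot>\<^sub>v ones_vec m"
    using all_ones_plus_smult_one_mult_vec_eq_const_iff[OF f_carrier] m by simp
  have "A *\<^sub>v g = (- 2 * real m) \<cdot>\<^sub>v g"
    using A v Av by (simp add: g_def mult_mat_vec smult_smult_assoc mult.commute)
  then have eq_g: "(A - all_ones_mat n - (- 2 * real m) \<cdot>\<^sub>m 1\<^sub>m n) *\<^sub>v g = (- (c * s)) \<cdot>\<^sub>v ones_vec n"
    using minus_all_ones_minus_smult_one_mult_vec_eq_const_iff[OF A g_carrier] sum_g by simp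
  show ?thesis
    using f_carrier g_carrier eq_f eq_g norm sum_f sum_g
    by (intro exI[of _ "2 * c * s"] exI[of _ f] exI[of _ g]) simp
qed

theorem lemma3p5:
  fixes n m :: nat and E :: "nat \<Rightarrow> nat \<Rightarrow> bool"
  assumes "n \<ge> 1" and "m \<ge> 1" and "simple_graph n E"
  defines "A \<equiv> adjacency_matrix n E"
  defines "\<alpha> \<equiv> - 2 * real m"
  shows "(\<exists>(\<mu>::real) (f::real vec) (g::real vec).
            f \<in> carrier_vec m \<and> g \<in> carrier_vec n \<and>
            (all_ones_mat m + \<alpha> \<cdot>\<^sub>m 1\<^sub>m m) *\<^sub>v f = (\<mu> / 2) \<cdot>\<^sub>v ones_vec m \<and>
            (A - all_ones_mat n - \<alpha> \<cdot>\<^sub>m 1\<^sub>m n) *\<^sub>v g = (- \<mu> / 2) \<cdot>\<^sub>v ones_vec n \<and>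
            f \<bullet> f + g \<bullet> g = 1 \<and>
            ones_vec m \<bullet> f + ones_vec n \<bullet> g = 0)
         \<longleftrightarrow> eigenvalue A (- 2 * real m)"
proof -
  \<comment> \<open>Only the shape of A matters: the equivalence holds for every real n \<times> n matrix.\<close>
  have A: "A \<in> carrier_mat n n"
    by (simp add: A_def adjacency_matrix_def)
  have m: "m > 0"
    using \<open>m \<ge> 1\<close> by simp
  show ?thesis
    unfolding \<alpha>_def eigenvalue_def
    using eigenvector_of_solution[OF A m] solution_of_eigenvector[OF A m] by blast
qed

end
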